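(* In the algebra $\mathcal O_q$ defined in the context, for all $n\in\mathbb N$: $$\mathcal W_{-n}=-(q-q^{-1})^{-1}\sum_{k=0}^n\sum_{\ell=0}^k\binom{k}{\ell}q^{2\ell-k}[2]_q^{-k-2}\tilde{\mathcal G}_{n-k}B_{(k-2\ell)\delta+\alpha_0},$$ $$\mathcal W_{n+1}=-(q-q^{-1})^{-1}\sum_{k=0}^n\sum_{\ell=0}^k\binom{k}{\ell}q^{k-2\ell}[2]_q^{-k-2}\tilde{\mathcal G}_{n-k}B_{(k-2\ell)\delta+\alpha_1}.$$
   Context: All algebras are associative and unital over a field $\mathbb F$; $q\in\mathbb F$ is nonzero and not a root of unity; $[n]_q=(q^n-q^{-n})/(q-q^{-1})$. For elements $X,Y$ of an algebra, $[X,Y]=XY-YX$ and $[X,Y]_q=qXY-q^{-1}YX$. Let $\rho=-(q^2-q^{-2})^2$. The algebra $\mathcal O_q$ is defined by generators $\mathcal W_{-k},\mathcal W_{k+1},\mathcal G_{k+1},\tilde{\mathcal G}_{k+1}$ ($k\in\mathbb N$) and the following relations for all $k,\ell\in\mathbb N$: $[\mathcal W_0,\mathcal W_{k+1}]=[\mathcal W_{-k},\mathcal W_1]=(\tilde{\mathcal G}_{k+1}-\mathcal G_{k+1})/(q+q^{-1})$; $[\mathcal W_0,\mathcal G_{k+1}]_q=[\tilde{\mathcal G}_{k+1},\mathcal W_0]_q=\rho\mathcal W_{-k-1}-\rho\mathcal W_{k+1}$; $[\mathcal G_{k+1},\mathcal W_1]_q=[\mathcal W_1,\tilde{\mathcal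 G}_{k+1}]_q=\rho\mathcal W_{k+2}-\rho\mathcal W_{-k}$; $[\mathcal W_{-k},\mathcal W_{-\ell}]=0$, $[\mathcal W_{k+1},\mathcal W_{\ell+1}]=0$; $[\mathcal W_{-k},\mathcal W_{\ell+1}]+[\mathcal W_{k+1},\mathcal W_{-\ell}]=0$; $[\mathcal W_{-k},\mathcal G_{\ell+1}]+[\mathcal G_{k+1},\mathcal W_{-\ell}]=0$; $[\mathcal W_{-k},\tilde{\mathcal G}_{\ell+1}]+[\tilde{\mathcal G}_{k+1},\mathcal W_{-\ell}]=0$; $[\mathcal W_{k+1},\mathcal G_{\ell+1}]+[\mathcal G_{k+1},\mathcal W_{\ell+1}]=0$; $[\mathcal W_{k+1},\tilde{\mathcal G}_{\ell+1}]+[\tilde{\mathcal G}_{k+1},\mathcal W_{\ell+1}]=0$; $[\mathcal G_{k+1},\mathcal G_{\ell+1}]=0$, $[\tilde{\mathcal G}_{k+1},\tilde{\mathcal G}_{\ell+1}]=0$; $[\tilde{\mathcal G}_{k+1},\mathcal G_{\ell+1}]+[\mathcal G_{k+1},\tilde{\mathcal G}_{\ell+1}]=0$. Convention: $\tilde{\mathcal G}_0=-(q-q^{-1})[2]_q^2$. Define $B_\delta=q^{-2}\mathcal W_1\mathcal W_0-\mathcal W_0\mathcal W_1$; $B_{\alpha_0}=\mathcal W_0$, $B_{\delta+\alpha_0}=\mathcal W_1+\frac{q[B_\delta,\mathcal W_0]}{(q-q^{-1})(q^2-q^{-2})}$, $B_{n\delta+\alpha_0}=B_{(n-2)\delta+\alpha_0}+\frac{q[B_\delta,B_{(n-1)\delta+\alpha_0}]}{(q-q^{-1})(q^2-q^{-2})}$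 for $n\ge2$; $B_{\alpha_1}=\mathcal W_1$, $B_{\delta+\alpha_1}=\mathcal W_0-\frac{q[B_\delta,\mathcal W_1]}{(q-q^{-1})(q^2-q^{-2})}$, $B_{n\delta+\alpha_1}=B_{(n-2)\delta+\alpha_1}-\frac{q[B_\delta,B_{(n-1)\delta+\alpha_1}]}{(q-q^{-1})(q^2-q^{-2})}$ for $n\ge2$. For negative integers $k$, set $B_{k\delta+\alpha_0}=B_{(-k-1)\delta+\alpha_1}$ and $B_{k\delta+\alpha_1}=B_{(-k-1)\delta+\alpha_0}$. *)

theory Defs
  imports Main
begin

text \<open>An F-algebra is modelled as a ring 'a together with a central unital ring
homomorphism emb from the field 'f into 'a (scalar c acts as emb c * _).\<close>

definition central_emb :: "('f::field \<Rightarrow> 'a::ring_1) \<Rightarrow> bool" where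
  "central_emb emb \<longleftrightarrow> emb 1 = 1 \<and> (\<forall>x y. emb (x + y) = emb x + emb y)
     \<and> (\<forall>x y. emb (x * y) = emb x * emb y) \<and> (\<forall>x a. emb x * a = a * emb x)"

definition comm :: "'a::ring_1 \<Rightarrow> 'a \<Rightarrow> 'a" where
  "comm x y = x * y - y * x"

definition qcomm :: "('f::field \<Rightarrow> 'a::ring_1) \<Rightarrow> 'f \<Rightarrow> 'a \<Rightarrow> 'a \<Rightarrow> 'a" where
  "qcomm emb q x y = emb q * x * y - emb (inverse q) * y * x"

definition qint :: "'f::field \<Rightarrow> nat \<Rightarrow> 'f" where
  "qint q n = (q ^ n - inverse q ^ n) / (q - inverse q)"

definition rho :: "'f::field \<Rightarrow> 'f" where
  "rho q = - ((q ^ 2 - inverse q ^ 2) ^ 2)"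

text \<open>Generators: Wm k = W_{-k}, Wp k = W_{k+1}, G k = G_{k+1}, Gt k = tilde G_{k+1}.\<close>

definition Oq_rels :: "('f::field \<Rightarrow> 'a::ring_1) \<Rightarrow> 'f \<Rightarrow> (nat \<Rightarrow> 'a) \<Rightarrow> (nat \<Rightarrow> 'a)
    \<Rightarrow> (nat \<Rightarrow> 'a) \<Rightarrow> (nat \<Rightarrow> 'a) \<Rightarrow> bool" where
  "Oq_rels emb q Wm Wp G Gt \<longleftrightarrow> (\<forall>k l.
     comm (Wm 0) (Wp k) = emb (inverse (q + inverse q)) * (Gt k - G k)
   \<and> comm (Wm k) (Wp 0) = emb (inverse (q + inverse q)) * (Gt k - G k)
   \<and> qcomm emb q (Wm 0) (G k) = emb (rho q) * (Wm (k+1) - Wp k)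
   \<and> qcomm emb q (Gt k) (Wm 0) = emb (rho q) * (Wm (k+1) - Wp k)
   \<and> qcomm emb q (G k) (Wp 0) = emb (rho q) * (Wp (k+1) - Wm k)
   \<and> qcomm emb q (Wp 0) (Gt k) = emb (rho q) * (Wp (k+1) - Wm k)
   \<and> comm (Wm k) (Wm l) = 0 \<and> comm (Wp k) (Wp l) = 0
   \<and> comm (Wm k) (Wp l) + comm (Wp k) (Wm l) = 0
   \<and> comm (Wm k) (G l) + comm (G k) (Wm l) = 0
   \<and> comm (Wm k) (Gt l) + comm (Gt k) (Wm l) = 0
   \<and> comm (Wp k) (G l) + comm (G k) (Wp l) = 0
   \<and> comm (Wp k) (Gt l) + comm (Gt k) (Wp l) = 0
   \<and> comm (G k) (G l) = 0 \<and> comm (Gt k) (Gt l) = 0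
   \<and> comm (Gt k) (G l) + comm (G k) (Gt l) = 0)"

definition Gtilde :: "('f::field \<Rightarrow> 'a::ring_1) \<Rightarrow> 'f \<Rightarrow> (nat \<Rightarrow> 'a) \<Rightarrow> nat \<Rightarrow> 'a" where
  "Gtilde emb q Gt n = (if n = 0 then emb (- (q - inverse q) * qint q 2 ^ 2) else Gt (n - 1))"

definition Bdelta :: "('f::field \<Rightarrow> 'a::ring_1) \<Rightarrow> 'f \<Rightarrow> (nat \<Rightarrow> 'a) \<Rightarrow> (nat \<Rightarrow> 'a) \<Rightarrow> 'a" where
  "Bdelta emb q Wm Wp = emb (inverse q ^ 2) * Wp 0 * Wm 0 - Wm 0 * Wp 0"

definition Bcoef :: "'f::field \<Rightarrow> 'f" where
  "Bcoef q = q / ((q - inverse q) * (q ^ 2 - inverse q ^ 2))"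

text \<open>B0 emb q Wm Wp n = B_{n delta + alpha_0}, B1 ... n = B_{n delta + alpha_1}, n \<ge> 0.\<close>
fun B0 :: "('f::field \<Rightarrow> 'a::ring_1) \<Rightarrow> 'f \<Rightarrow> (nat \<Rightarrow> 'a) \<Rightarrow> (nat \<Rightarrow> 'a) \<Rightarrow> nat \<Rightarrow> 'a" where
  "B0 emb q Wm Wp 0 = Wm 0"
| "B0 emb q Wm Wp (Suc 0) = Wp 0 + emb (Bcoef q) * comm (Bdelta emb q Wm Wp) (Wm 0)"
| "B0 emb q Wm Wp (Suc (Suc n)) = B0 emb q Wm Wp n
     + emb (Bcoef q) * comm (Bdelta emb q Wm Wp) (B0 emb q Wm Wp (Suc n))"

fun B1 :: "('f::field \<Rightarrow> 'a::ring_1) \<Rightarrow> 'f \<Rightarrow> (nat \<Rightarrow> 'a) \<Rightarrow> (nat \<Rightarrow> 'a) \<Rightarrow> nat \<Rightarrow> 'a" where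
  "B1 emb q Wm Wp 0 = Wp 0"
| "B1 emb q Wm Wp (Suc 0) = Wm 0 - emb (Bcoef q) * comm (Bdelta emb q Wm Wp) (Wp 0)"
| "B1 emb q Wm Wp (Suc (Suc n)) = B1 emb q Wm Wp n
     - emb (Bcoef q) * comm (Bdelta emb q Wm Wp) (B1 emb q Wm Wp (Suc n))"

text \<open>Integer-indexed: B_{k delta + alpha_0} and B_{k delta + alpha_1} for k \<in> Z.\<close>
definition B0i :: "('f::field \<Rightarrow> 'a::ring_1) \<Rightarrow> 'f \<Rightarrow> (nat \<Rightarrow> 'a) \<Rightarrow> (nat \<Rightarrow> 'a) \<Rightarrow> int \<Rightarrow> 'a" where
  "B0i emb q Wm Wp k = (if k \<ge> 0 then B0 emb q Wm Wp (nat k) else B1 emb q Wm Wp (nat (- k - 1)))"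

definition B1i :: "('f::field \<Rightarrow> 'a::ring_1) \<Rightarrow> 'f \<Rightarrow> (nat \<Rightarrow> 'a) \<Rightarrow> (nat \<Rightarrow> 'a) \<Rightarrow> int \<Rightarrow> 'a" where
  "B1i emb q Wm Wp k = (if k \<ge> 0 then B1 emb q Wm Wp (nat k) else B0 emb q Wm Wp (nat (- k - 1)))"

end

theory Submission
  imports Defs "HOL.Vector_Spaces"
begin

(*
  Put g = -(q - q^-1) [2]_q^2 (the value of tilde G_0) and rho = -(q - q^-1)^2 [2]_q^2.
  The q-commutation relations of G_k, tilde G_k with W_0, W_1 imply that B_delta commutes
  with every tilde G_k, and that ad B_delta steps through the generators:
    g W_{-n-1} = tilde G_{n+1} W_0 + g W_{n+1} - rho^-1 [B_delta, g W_{-n}],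
    g W_{n+2}  = tilde G_{n+1} W_1 + g W_{-n}  + q^2 rho^-1 [B_delta, g W_{n+1}].
  On the other side, B_j = B_{j delta + alpha_0} (j in Z) satisfies the single recursion
  B_{j+1} = B_{j-1} + c [B_delta, B_j] with c = q / ((q - q^-1)(q^2 - q^-2)), so the
  q-binomial means E_k, F_k of the B_j centred at j = 0 and j = -1 satisfy
  E_{k+1} = F_k - rho^-1 [B_delta, E_k] and F_{k+1} = E_k + q^2 rho^-1 [B_delta, F_k].
  Hence the convolutions sum_k tilde G_{n-k} E_k and sum_k tilde G_{n-k} F_k obey the same
  recursion as g W_{-n} and g W_{n+1}, from the same initial values W_0 and W_1.
*)

lemma comm_sum_right: "comm x (\<Sum>i\<in>A. f i) = (\<Sum>i\<in>A. comm x (f i))"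
  by (simp add: comm_def sum_distrib_left sum_distrib_right sum_subtractf)

lemma comm_mult_right: "comm x (y * z) = comm x y * z + y * comm x z"
  by (simp add: comm_def algebra_simps)

lemma comm_antisym: "comm x y = - comm y x"
  by (simp add: comm_def)

locale algebra_over =
  fixes emb :: "'f::field \<Rightarrow> 'a::ring_1"
  assumes central_emb: "central_emb emb"
begin

lemma emb_add: "emb (x + y) = emb x + emb y"
  and emb_mult: "emb (x * y) = emb x * emb y"
  and emb_one: "emb 1 = 1"
  and emb_commute: "emb x * a = a * emb x"
  using central_emb unfolding central_emb_def by blast+

definition scale :: "'f \<Rightarrow> 'a \<Rightarrow> 'a"  (infixr \<open>*s\<close> 75)
  where "c *s x = emb c * x"

sublocale vector_space scale
  by unfold_locales
    (simp_all add: scale_def emb_add emb_mult emb_one distrib_left distrib_right mult.assoc)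

lemma scale_mult_left [simp]: "(c *s x) * y = c *s (x * y)"
  by (simp add: scale_def mult.assoc)

lemma scale_mult_right [simp]: "x * (c *s y) = c *s (x * y)"
  by (metis emb_commute mult.assoc scale_def)

lemma comm_scale_right: "comm x (c *s y) = c *s comm x y"
  by (simp add: comm_def scale_right_diff_distrib)

lemma qcomm_eq_iff:
  assumes "q \<noteq> 0"
  shows "qcomm emb q x y = z \<longleftrightarrow> y * x = q\<^sup>2 *s (x * y) - q *s z"
proof -
  have "qcomm emb q x y = q *s (x * y) - inverse q *s (y * x)"
    by (simp add: qcomm_def scale_def mult.assoc)
  then have "q *s qcomm emb q x y = q\<^sup>2 *s (x * y) - y * x"
    using assms by (simp add: scale_right_diff_distrib power2_eq_square)
  then have "qcomm emb q x y = z \<longleftrightarrow> q\<^sup>2 *s (x * y) - y * x = q *s z"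
    using assms by (metis scale_cancel_left)
  then show ?thesis by (auto simp: algebra_simps)
qed

lemma qcomm_eq_iff':
  assumes "q \<noteq> 0"
  shows "qcomm emb q x y = z \<longleftrightarrow> x * y = (inverse q)\<^sup>2 *s (y * x) + inverse q *s z"
proof -
  have "qcomm emb q x y = q *s (x * y) - inverse q *s (y * x)"
    by (simp add: qcomm_def scale_def mult.assoc)
  then have "inverse q *s qcomm emb q x y = x * y - (inverse q)\<^sup>2 *s (y * x)"
    using assms by (simp add: scale_right_diff_distrib power2_eq_square)
  then have "qcomm emb q x y = z \<longleftrightarrow> x * y - (inverse q)\<^sup>2 *s (y * x) = inverse q *s z"
    using assms by (metis inverse_nonzero_iff_nonzero scale_cancel_left)
  then show ?thesis by (auto simp: algebra_simps)
qed

lemma comm_qcomm_pair: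
  assumes "q \<noteq> 0" and ZA: "qcomm emb q Z A = U" and BZ: "qcomm emb q B Z = V"
  shows "comm ((inverse q)\<^sup>2 *s (B * A) - A * B) Z = inverse q *s (comm V A + comm U B)"
proof -
  have A_Z: "A * Z = q\<^sup>2 *s (Z * A) - q *s U"
    using ZA qcomm_eq_iff assms(1) by blast
  have Z_B: "Z * B = q\<^sup>2 *s (B * Z) - q *s V"
    using BZ qcomm_eq_iff assms(1) by blast
  have B_Z: "B * Z = (inverse q)\<^sup>2 *s (Z * B) + inverse q *s V"
    using BZ qcomm_eq_iff' assms(1) by blast
  have BAZ: "B * (A * Z) - (Z * B) * A = q *s (V * A - B * U)"
    unfolding A_Z Z_B by (simp add: algebra_simps)
  have ABZ: "A * (B * Z) - Z * A * B = inverse q *s (A * V - U * B)"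
  proof -
    have "A * (B * Z) = (inverse q)\<^sup>2 *s ((A * Z) * B) + inverse q *s (A * V)"
      unfolding B_Z by (simp add: algebra_simps)
    also have "\<dots> = Z * A * B + inverse q *s (A * V - U * B)"
      unfolding A_Z using assms(1) by (simp add: algebra_simps power2_eq_square)
    finally show ?thesis by simp
  qed
  have "comm ((inverse q)\<^sup>2 *s (B * A) - A * B) Z
      = (inverse q)\<^sup>2 *s (B * (A * Z) - (Z * B) * A) - (A * (B * Z) - Z * A * B)"
    by (simp add: comm_def algebra_simps)
  also have "\<dots> = inverse q *s (comm V A + comm U B)"
  proof -
    have "(inverse q)\<^sup>2 * q = inverse q"
      using assms(1) by (simp add: power2_eq_square)
    then show ?thesis
      unfolding BAZ ABZ by (simp add: comm_def algebra_simps)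
  qed
  finally show ?thesis .
qed

lemma sum_binomial_Suc_scale:
  "(\<Sum>l\<le>Suc k. of_nat (Suc k choose l) *s f l)
    = (\<Sum>l\<le>k. of_nat (k choose l) *s f l) + (\<Sum>l\<le>k. of_nat (k choose l) *s f (Suc l))"
proof -
  have "(\<Sum>l\<le>k. of_nat (k choose l) *s f l) = (\<Sum>l\<le>Suc k. of_nat (k choose l) *s f l)"
    by (simp add: binomial_eq_0)
  also have "\<dots> = f 0 + (\<Sum>l\<le>k. of_nat (k choose Suc l) *s f (Suc l))"
    by (subst sum.atMost_Suc_shift) simp
  finally have "(\<Sum>l\<le>k. of_nat (k choose l) *s f l)
      = f 0 + (\<Sum>l\<le>k. of_nat (k choose Suc l) *s f (Suc l))" .
  moreover have "(\<Sum>l\<le>Suc k. of_nat (Suc k choose l) *s f l) = f 0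
      + (\<Sum>l\<le>k. of_nat (k choose l) *s f (Suc l)) + (\<Sum>l\<le>k. of_nat (k choose Suc l) *s f (Suc l))"
    by (subst sum.atMost_Suc_shift) (simp add: scale_left_distrib sum.distrib add.assoc)
  ultimately show ?thesis by (simp add: algebra_simps)
qed

definition binomial_qsum :: "'f \<Rightarrow> (int \<Rightarrow> 'a) \<Rightarrow> nat \<Rightarrow> int \<Rightarrow> 'a" where
  "binomial_qsum q b k j =
     (\<Sum>l\<le>k. (of_nat (k choose l) * q powi (2 * int l - int k)) *s b (j + int k - 2 * int l))"

lemma binomial_qsum_Suc:
  assumes "q \<noteq> 0"
  shows "binomial_qsum q b (Suc k) j
    = inverse q *s binomial_qsum q b k (j + 1) + q *s binomial_qsum q b k (j - 1)"
proof -
  define f where "f l = q powi (2 * int l - int (Suc k)) *s b (j + int (Suc k) - 2 * int l)" for l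
  have "binomial_qsum q b (Suc k) j = (\<Sum>l\<le>Suc k. of_nat (Suc k choose l) *s f l)"
    by (simp add: binomial_qsum_def f_def)
  also have "\<dots> = (\<Sum>l\<le>k. of_nat (k choose l) *s f l) + (\<Sum>l\<le>k. of_nat (k choose l) *s f (Suc l))"
    by (rule sum_binomial_Suc_scale)
  also have "(\<Sum>l\<le>k. of_nat (k choose l) *s f l) = inverse q *s binomial_qsum q b k (j + 1)"
    unfolding binomial_qsum_def scale_sum_right
  proof (rule sum.cong)
    fix l
    have "q powi (2 * int l - int (Suc k)) = q powi ((2 * int l - int k) - 1)"
      by (simp add: algebra_simps)
    also have "\<dots> = inverse q * q powi (2 * int l - int k)"
      using assms by (subst power_int_diff) (auto simp: field_simps)
    finally have "q powi (2 * int l - int (Suc k)) = inverse q * q powi (2 * int l - int k)" .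
    then show "of_nat (k choose l) *s f l
        = inverse q *s (of_nat (k choose l) * q powi (2 * int l - int k))
            *s b (j + 1 + int k - 2 * int l)"
      by (simp add: f_def algebra_simps)
  qed simp
  also have "(\<Sum>l\<le>k. of_nat (k choose l) *s f (Suc l)) = q *s binomial_qsum q b k (j - 1)"
    unfolding binomial_qsum_def scale_sum_right
  proof (rule sum.cong)
    fix l
    have "q powi (2 * int (Suc l) - int (Suc k)) = q powi ((2 * int l - int k) + 1)"
      by (simp add: algebra_simps)
    also have "\<dots> = q * q powi (2 * int l - int k)"
      using assms by (subst power_int_add_1') auto
    finally have "q powi (2 * int (Suc l) - int (Suc k)) = q * q powi (2 * int l - int k)" .
    then show "of_nat (k choose l) *s f (Suc l)
        = q *s (of_nat (k choose l) * q powi (2 * int l - int k))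
            *s b (j - 1 + int k - 2 * int l)"
      by (simp add: f_def algebra_simps)
  qed simp
  finally show ?thesis .
qed

lemma binomial_qsum_recurrence:
  assumes "\<And>j. b (j + 1) = b (j - 1) + c *s comm x (b j)"
  shows "binomial_qsum q b k (j + 1)
    = binomial_qsum q b k (j - 1) + c *s comm x (binomial_qsum q b k j)"
proof -
  have "b (j + 1 + int k - 2 * int l)
      = b (j - 1 + int k - 2 * int l) + c *s comm x (b (j + int k - 2 * int l))" for l
    using assms[of "j + int k - 2 * int l"] by (simp add: algebra_simps)
  then show ?thesis
    by (simp add: binomial_qsum_def comm_sum_right comm_scale_right scale_sum_right
        scale_right_distrib sum.distrib mult.commute)
qed

lemma B0i_recurrence:
  "B0i emb q Wm Wp (j + 1)
    = B0i emb q Wm Wp (j - 1) + Bcoef q *s comm (Bdelta emb q Wm Wp) (B0i emb q Wm Wp j)"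
proof -
  consider (pos) m where "j = int m + 1" | (zero) "j = 0" | (minus_one) "j = -1"
    | (neg) m where "j = - int m - 2"
  proof -
    have "j \<ge> 1 \<or> j = 0 \<or> j = -1 \<or> j \<le> -2" by linarith
    then show thesis
      using that(1)[of "nat (j - 1)"] that(2,3) that(4)[of "nat (- j - 2)"] by force
  qed
  then show ?thesis
  proof cases
    case (pos m)
    then have "nat (j + 1) = Suc (Suc m)" "nat j = Suc m" "nat (j - 1) = m" by auto
    with pos show ?thesis by (simp add: B0i_def scale_def)
  next
    case zero
    then show ?thesis by (simp add: B0i_def scale_def)
  next
    case minus_one
    then show ?thesis by (simp add: B0i_def scale_def numeral_2_eq_2)
  next
    \<comment> \<open>the defining recursion of \<open>B1\<close>, read backwards\<close>
    case (neg m)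
    then have "nat (- (j + 1) - 1) = m" "nat (- j - 1) = Suc m" "nat (- (j - 1) - 1) = Suc (Suc m)"
      by auto
    with neg show ?thesis by (simp add: B0i_def scale_def)
  qed
qed

end

locale Oq_algebra = algebra_over emb for emb :: "'f::field \<Rightarrow> 'a::ring_1" +
  fixes q :: 'f and Wm Wp G Gt :: "nat \<Rightarrow> 'a"
  assumes q_nonzero: "q \<noteq> 0"
    and q_not_root_of_unity: "\<forall>m::nat. m > 0 \<longrightarrow> q ^ m \<noteq> 1"
    and relations: "Oq_rels emb q Wm Wp G Gt"
begin

lemma q_plus_inverse_nonzero: "q + inverse q \<noteq> 0"
proof
  assume "q + inverse q = 0"
  then have "q * q = -1"
    using q_nonzero by (simp add: field_simps eq_neg_iff_add_eq_0 add.commute)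
  then have "q ^ 4 = 1"
    by (simp add: power4_eq_xxxx)
  then show False using q_not_root_of_unity by auto
qed

lemma q_minus_inverse_nonzero: "q - inverse q \<noteq> 0"
proof
  assume "q - inverse q = 0"
  then have "q ^ 2 = 1"
    using q_nonzero by (simp add: field_simps power2_eq_square)
  then show False using q_not_root_of_unity by auto
qed

lemma qint_2: "qint q 2 = q + inverse q"
  using q_minus_inverse_nonzero by (simp add: qint_def field_simps power2_eq_square)

lemma rho_eq: "rho q = - ((q - inverse q) * (q + inverse q))\<^sup>2"
  by (simp add: rho_def power2_eq_square algebra_simps)

lemma rho_nonzero: "rho q \<noteq> 0"
  using q_minus_inverse_nonzero q_plus_inverse_nonzero by (simp add: rho_eq)

lemma Bcoef_over_qint_2:
  "inverse (q + inverse q) * (inverse q * Bcoef q) = - inverse (rho q)"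
  "inverse (q + inverse q) * (q * Bcoef q) = - (q\<^sup>2 * inverse (rho q))"
  using q_nonzero q_minus_inverse_nonzero q_plus_inverse_nonzero
  by (simp_all add: Bcoef_def rho_eq field_simps power2_eq_square)

abbreviation "W0 \<equiv> Wm 0"
abbreviation "W1 \<equiv> Wp 0"
abbreviation "Bd \<equiv> Bdelta emb q Wm Wp"

lemma comm_W0_Wp: "comm W0 (Wp k) = inverse (q + inverse q) *s (Gt k - G k)"
  and comm_Wm_W1: "comm (Wm k) W1 = inverse (q + inverse q) *s (Gt k - G k)"
  and qcomm_W0_G: "qcomm emb q W0 (G k) = rho q *s (Wm (Suc k) - Wp k)"
  and qcomm_Gt_W0: "qcomm emb q (Gt k) W0 = rho q *s (Wm (Suc k) - Wp k)"
  and qcomm_G_W1: "qcomm emb q (G k) W1 = rho q *s (Wp (Suc k) - Wm k)"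
  and qcomm_W1_Gt: "qcomm emb q W1 (Gt k) = rho q *s (Wp (Suc k) - Wm k)"
  and Wm_commute: "Wm k * Wm l = Wm l * Wm k"
  and Wp_commute: "Wp k * Wp l = Wp l * Wp k"
  using relations unfolding Oq_rels_def scale_def comm_def by auto

lemma Bdelta_eq: "Bd = (inverse q)\<^sup>2 *s (W1 * W0) - W0 * W1"
  by (simp add: Bdelta_def scale_def mult.assoc power_inverse)

lemma comm_Bdelta_Wm:
  "comm Bd (Wm n) = (q - inverse q) *s (Gt n * W0) - rho q *s (Wm (Suc n) - Wp n)"
proof -
  define X where "X = Wm (Suc n) - Wp n"
  have W0_Wm: "W0 * Wm n = Wm n * W0" "W0 * (Wm n * z) = Wm n * (W0 * z)" for z
    using Wm_commute by (metis mult.assoc)+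
  have "comm Bd (Wm n) = (inverse q)\<^sup>2 *s (comm W1 (Wm n) * W0) - W0 * comm W1 (Wm n)"
    by (simp add: Bdelta_eq comm_def algebra_simps W0_Wm)
  also have "\<dots> = inverse (q + inverse q) *s
      ((W0 * Gt n - (inverse q)\<^sup>2 *s (Gt n * W0)) - (W0 * G n - (inverse q)\<^sup>2 *s (G n * W0)))"
    unfolding comm_antisym[of W1] comm_Wm_W1 by (simp add: algebra_simps)
  also have "\<dots> = inverse (q + inverse q) *s
      ((q\<^sup>2 - (inverse q)\<^sup>2) *s (Gt n * W0) - ((q + inverse q) * rho q) *s X)"
  proof -
    have W0_Gt: "W0 * Gt n = q\<^sup>2 *s (Gt n * W0) - (q * rho q) *s X"
      using qcomm_Gt_W0 qcomm_eq_iff q_nonzero by (simp add: X_def)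
    have G_W0: "G n * W0 = q\<^sup>2 *s (W0 * G n) - (q * rho q) *s X"
      using qcomm_W0_G qcomm_eq_iff q_nonzero by (simp add: X_def)
    have Gt_part: "W0 * Gt n - (inverse q)\<^sup>2 *s (Gt n * W0)
        = (q\<^sup>2 - (inverse q)\<^sup>2) *s (Gt n * W0) - (q * rho q) *s X"
      unfolding W0_Gt by (simp add: algebra_simps)
    have G_part: "W0 * G n - (inverse q)\<^sup>2 *s (G n * W0) = (inverse q * rho q) *s X"
      unfolding G_W0 using q_nonzero by (simp add: algebra_simps field_simps power2_eq_square)
    show ?thesis unfolding Gt_part G_part by (simp add: algebra_simps)
  qed
  also have "\<dots> = (q - inverse q) *s (Gt n * W0) - rho q *s X"
  proof -
    have "inverse (q + inverse q) * (q\<^sup>2 - (inverse q)\<^sup>2) = q - inverse q"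
      using q_plus_inverse_nonzero by (simp add: field_simps power2_eq_square)
    moreover have "inverse (q + inverse q) * ((q + inverse q) * rho q) = rho q"
      using q_plus_inverse_nonzero by simp
    ultimately show ?thesis by (simp add: scale_right_diff_distrib)
  qed
  finally show ?thesis unfolding X_def .
qed

lemma comm_Bdelta_Gt: "comm Bd (Gt k) = 0"
proof -
  have "comm Bd (Gt k) = inverse q *s (comm (rho q *s (Wp (Suc k) - Wm k)) W0
      + comm (rho q *s (Wm (Suc k) - Wp k)) W1)"
    unfolding Bdelta_eq by (rule comm_qcomm_pair[OF q_nonzero qcomm_Gt_W0 qcomm_W1_Gt])
  also have "\<dots> = - (inverse q * rho q) *s (comm W0 (Wp (Suc k)) - comm W0 (Wm k)
      + comm W1 (Wm (Suc k)) - comm W1 (Wp k))"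
    by (simp add: comm_def algebra_simps)
  also have "\<dots> = 0"
    using Wm_commute[of 0 k] Wp_commute[of 0 k]
    unfolding comm_antisym[of W1 "Wm (Suc k)"] comm_W0_Wp comm_Wm_W1 by (simp add: comm_def)
  finally show ?thesis .
qed

lemma comm_Bdelta_Wp:
  "comm Bd (Wp n) = (inverse q)\<^sup>2 *s (rho q *s (Wp (Suc n) - Wm n) - (q - inverse q) *s (Gt n * W1))"
proof -
  define X where "X = Wp (Suc n) - Wm n"
  have W1_Wp: "W1 * Wp n = Wp n * W1" "W1 * (Wp n * z) = Wp n * (W1 * z)" for z
    using Wp_commute by (metis mult.assoc)+
  have q_sq: "(inverse q)\<^sup>2 * q\<^sup>2 = 1"
    using q_nonzero by (simp add: power_mult_distrib[symmetric])
  have "comm Bd (Wp n) = (inverse q)\<^sup>2 *s (W1 * comm W0 (Wp n)) - comm W0 (Wp n) * W1"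
    by (simp add: Bdelta_eq comm_def algebra_simps W1_Wp)
  also have "\<dots> = inverse (q + inverse q) *s
      (((inverse q)\<^sup>2 *s (W1 * Gt n) - Gt n * W1) - ((inverse q)\<^sup>2 *s (W1 * G n) - G n * W1))"
    unfolding comm_W0_Wp by (simp add: algebra_simps)
  also have "\<dots> = (inverse q)\<^sup>2 *s inverse (q + inverse q) *s
      (((inverse q)\<^sup>2 - q\<^sup>2) *s (Gt n * W1) + ((q + inverse q) * rho q) *s X)"
  proof -
    have W1_Gt: "W1 * Gt n = (inverse q)\<^sup>2 *s (Gt n * W1) + (inverse q * rho q) *s X"
      using qcomm_W1_Gt qcomm_eq_iff' q_nonzero by (simp add: X_def)
    have W1_G: "W1 * G n = q\<^sup>2 *s (G n * W1) - (q * rho q) *s X"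
      using qcomm_G_W1 qcomm_eq_iff q_nonzero by (simp add: X_def)
    have Gt_part: "(inverse q)\<^sup>2 *s (W1 * Gt n) - Gt n * W1
        = (inverse q)\<^sup>2 *s (((inverse q)\<^sup>2 - q\<^sup>2) *s (Gt n * W1) + (inverse q * rho q) *s X)"
      unfolding W1_Gt using q_sq by (simp add: algebra_simps)
    have G_part: "(inverse q)\<^sup>2 *s (W1 * G n) - G n * W1 = - (inverse q)\<^sup>2 *s (q * rho q) *s X"
      unfolding W1_G using q_sq by (simp add: algebra_simps)
    show ?thesis unfolding Gt_part G_part by (simp add: algebra_simps mult.commute)
  qed
  also have "\<dots> = (inverse q)\<^sup>2 *s (rho q *s X - (q - inverse q) *s (Gt n * W1))"
  proof -
    have c1: "inverse (q + inverse q) * ((inverse q)\<^sup>2 - q\<^sup>2) = - (q - inverse q)"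
      using q_plus_inverse_nonzero by (simp add: field_simps power2_eq_square)
    have c2: "inverse (q + inverse q) * ((q + inverse q) * rho q) = rho q"
      using q_plus_inverse_nonzero by simp
    have "inverse (q + inverse q) *s
          (((inverse q)\<^sup>2 - q\<^sup>2) *s (Gt n * W1) + ((q + inverse q) * rho q) *s X)
        = rho q *s X - (q - inverse q) *s (Gt n * W1)"
      by (simp only: scale_right_distrib scale_scale c1 c2) (simp add: algebra_simps)
    then show ?thesis by simp
  qed
  finally show ?thesis unfolding X_def .
qed

abbreviation "B \<equiv> B0i emb q Wm Wp"

(* The weights (k choose l) q^(2l-k) add up to [2]_q^k, hence the name. *)
definition Bmean0 :: "nat \<Rightarrow> 'a" where
  "Bmean0 k = inverse (q + inverse q) ^ k *s binomial_qsum q B k 0"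

definition Bmean1 :: "nat \<Rightarrow> 'a" where
  "Bmean1 k = inverse (q + inverse q) ^ k *s binomial_qsum q B k (-1)"

lemma Bmean0_0: "Bmean0 0 = W0" and Bmean1_0: "Bmean1 0 = W1"
  by (simp_all add: Bmean0_def Bmean1_def binomial_qsum_def B0i_def)

lemma Bmean0_Suc: "Bmean0 (Suc k) = Bmean1 k - inverse (rho q) *s comm Bd (Bmean0 k)"
proof -
  let ?D = "binomial_qsum q B"
  have "?D (Suc k) 0 = inverse q *s ?D k (0 + 1) + q *s ?D k (-1)"
    using binomial_qsum_Suc[OF q_nonzero] by simp
  also have "?D k (0 + 1) = ?D k (-1) + Bcoef q *s comm Bd (?D k 0)"
    using binomial_qsum_recurrence[where b = B, OF B0i_recurrence, of q k 0] by simp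
  finally have "?D (Suc k) 0
      = (q + inverse q) *s ?D k (-1) + (inverse q * Bcoef q) *s comm Bd (?D k 0)"
    by (simp add: algebra_simps)
  then have step: "inverse (q + inverse q) *s ?D (Suc k) 0
      = ?D k (-1) - inverse (rho q) *s comm Bd (?D k 0)"
    using q_plus_inverse_nonzero
    by (simp only: scale_right_distrib scale_scale Bcoef_over_qint_2(1)) simp
  have "Bmean0 (Suc k) = inverse (q + inverse q) ^ k *s inverse (q + inverse q) *s ?D (Suc k) 0"
    by (simp add: Bmean0_def power_Suc2)
  also have "\<dots> = Bmean1 k - inverse (rho q) *s comm Bd (Bmean0 k)"
    unfolding step
    by (simp add: Bmean0_def Bmean1_def comm_scale_right scale_right_diff_distrib mult_ac)
  finally show ?thesis .
qed

lemma Bmean1_Suc: "Bmean1 (Suc k) = Bmean0 k + (q\<^sup>2 * inverse (rho q)) *s comm Bd (Bmean1 k)"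
proof -
  let ?D = "binomial_qsum q B"
  have "?D (Suc k) (-1) = inverse q *s ?D k 0 + q *s ?D k (-1 - 1)"
    using binomial_qsum_Suc[OF q_nonzero, of B k "-1"] by simp
  also have "?D k (-1 - 1) = ?D k 0 - Bcoef q *s comm Bd (?D k (-1))"
    using binomial_qsum_recurrence[where b = B, OF B0i_recurrence, of q k "-1"] by simp
  finally have "?D (Suc k) (-1) = (q + inverse q) *s ?D k 0 - (q * Bcoef q) *s comm Bd (?D k (-1))"
    by (simp add: algebra_simps)
  then have step: "inverse (q + inverse q) *s ?D (Suc k) (-1)
      = ?D k 0 + (q\<^sup>2 * inverse (rho q)) *s comm Bd (?D k (-1))"
    using q_plus_inverse_nonzero
    by (simp only: scale_right_diff_distrib scale_scale Bcoef_over_qint_2(2)) simp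
  have "Bmean1 (Suc k) = inverse (q + inverse q) ^ k *s inverse (q + inverse q) *s ?D (Suc k) (-1)"
    by (simp add: Bmean1_def power_Suc2)
  also have "\<dots> = Bmean0 k + (q\<^sup>2 * inverse (rho q)) *s comm Bd (Bmean1 k)"
    unfolding step by (simp add: Bmean0_def Bmean1_def comm_scale_right scale_right_distrib mult_ac)
  finally show ?thesis .
qed

definition Gtilde0_coeff :: 'f where
  "Gtilde0_coeff = - (q - inverse q) * (q + inverse q)\<^sup>2"

lemma Gtilde_0: "Gtilde emb q Gt 0 = Gtilde0_coeff *s 1"
  by (simp add: Gtilde_def Gtilde0_coeff_def scale_def qint_2)

lemma Gtilde_Suc: "Gtilde emb q Gt (Suc m) = Gt m"
  by (simp add: Gtilde_def)

lemma comm_Bdelta_Gtilde_mult: "comm Bd (Gtilde emb q Gt m * y) = Gtilde emb q Gt m * comm Bd y"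
proof -
  have "comm Bd (Gtilde emb q Gt m) = 0"
    by (cases m)
      (simp_all add: Gtilde_0 Gtilde_Suc comm_scale_right comm_Bdelta_Gt, simp add: comm_def)
  then show ?thesis by (simp add: comm_mult_right)
qed

definition Wm_expansion :: "nat \<Rightarrow> 'a" where
  "Wm_expansion n = (\<Sum>k\<le>n. Gtilde emb q Gt (n - k) * Bmean0 k)"

definition Wp_expansion :: "nat \<Rightarrow> 'a" where
  "Wp_expansion n = (\<Sum>k\<le>n. Gtilde emb q Gt (n - k) * Bmean1 k)"

lemma Wm_expansion_Suc:
  "Wm_expansion (Suc n) = Gt n * W0 + Wp_expansion n - inverse (rho q) *s comm Bd (Wm_expansion n)"
proof -
  have "Wm_expansion (Suc n) = Gtilde emb q Gt (Suc n) * Bmean0 0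
      + (\<Sum>k\<le>n. Gtilde emb q Gt (n - k) * Bmean0 (Suc k))"
    unfolding Wm_expansion_def by (subst sum.atMost_Suc_shift) simp
  then show ?thesis
    by (simp add: Bmean0_0 Bmean0_Suc Gtilde_Suc Wp_expansion_def Wm_expansion_def
        right_diff_distrib sum_subtractf comm_sum_right comm_Bdelta_Gtilde_mult scale_sum_right)
qed

lemma Wp_expansion_Suc:
  "Wp_expansion (Suc n)
    = Gt n * W1 + Wm_expansion n + (q\<^sup>2 * inverse (rho q)) *s comm Bd (Wp_expansion n)"
proof -
  have "Wp_expansion (Suc n) = Gtilde emb q Gt (Suc n) * Bmean1 0
      + (\<Sum>k\<le>n. Gtilde emb q Gt (n - k) * Bmean1 (Suc k))"
    unfolding Wp_expansion_def by (subst sum.atMost_Suc_shift) simp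
  then show ?thesis
    by (simp add: Bmean1_0 Bmean1_Suc Gtilde_Suc Wp_expansion_def Wm_expansion_def distrib_left
        sum.distrib comm_sum_right comm_Bdelta_Gtilde_mult scale_sum_right add.assoc)
qed

lemma Gtilde0_coeff_over_rho: "Gtilde0_coeff * inverse (rho q) * (q - inverse q) = 1"
proof -
  have "rho q = Gtilde0_coeff * (q - inverse q)"
    by (simp add: rho_eq Gtilde0_coeff_def power2_eq_square algebra_simps)
  then show ?thesis
    using rho_nonzero by (simp add: field_simps)
qed

lemma Wm_Suc_scaled:
  "Gtilde0_coeff *s Wm (Suc n)
    = Gt n * W0 + Gtilde0_coeff *s Wp n - inverse (rho q) *s comm Bd (Gtilde0_coeff *s Wm n)"
proof -
  have "inverse (rho q) *s comm Bd (Wm n)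
      = (inverse (rho q) * (q - inverse q)) *s (Gt n * W0) - (Wm (Suc n) - Wp n)"
    using rho_nonzero by (simp add: comm_Bdelta_Wm scale_right_diff_distrib)
  then have "Wm (Suc n) = Wp n + (inverse (rho q) * (q - inverse q)) *s (Gt n * W0)
      - inverse (rho q) *s comm Bd (Wm n)"
    by (simp add: algebra_simps)
  then show ?thesis
    using Gtilde0_coeff_over_rho
    by (simp add: comm_scale_right scale_right_diff_distrib scale_right_distrib mult.assoc
        scale_left_commute[of Gtilde0_coeff])
qed

lemma Wp_Suc_scaled:
  "Gtilde0_coeff *s Wp (Suc n)
    = Gt n * W1 + Gtilde0_coeff *s Wm n + (q\<^sup>2 * inverse (rho q)) *s comm Bd (Gtilde0_coeff *s Wp n)"
proof -
  have "q\<^sup>2 * (inverse q)\<^sup>2 = 1"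
    using q_nonzero by (simp flip: power_mult_distrib)
  then have "q\<^sup>2 *s comm Bd (Wp n) = rho q *s (Wp (Suc n) - Wm n) - (q - inverse q) *s (Gt n * W1)"
    by (simp add: comm_Bdelta_Wp)
  then have "(q\<^sup>2 * inverse (rho q)) *s comm Bd (Wp n)
      = (Wp (Suc n) - Wm n) - (inverse (rho q) * (q - inverse q)) *s (Gt n * W1)"
    using rho_nonzero
    by (simp add: mult.commute flip: scale_scale) (simp add: scale_right_diff_distrib)
  then have "Wp (Suc n) = Wm n + (inverse (rho q) * (q - inverse q)) *s (Gt n * W1)
      + (q\<^sup>2 * inverse (rho q)) *s comm Bd (Wp n)"
    by (simp add: algebra_simps)
  then show ?thesis
    using Gtilde0_coeff_over_rho
    by (simp add: comm_scale_right scale_right_distrib mult.assoc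
        scale_left_commute[of Gtilde0_coeff])
qed

lemma expansions_eq:
  "Wm_expansion n = Gtilde0_coeff *s Wm n \<and> Wp_expansion n = Gtilde0_coeff *s Wp n"
proof (induction n)
  case 0
  show ?case
    by (simp add: Wm_expansion_def Wp_expansion_def Gtilde_0 Bmean0_0 Bmean1_0)
next
  case (Suc n)
  then show ?case
    by (simp add: Wm_expansion_Suc Wp_expansion_Suc Wm_Suc_scaled Wp_Suc_scaled)
qed

lemma Bmean1_eq:
  "Bmean1 k = inverse (q + inverse q) ^ k *s
     (\<Sum>l\<le>k. (of_nat (k choose l) * q powi (int k - 2 * int l))
        *s B1i emb q Wm Wp (int k - 2 * int l))"
proof -
  have "binomial_qsum q B k (-1)
      = (\<Sum>l\<le>k. (of_nat (k choose (k - l)) * q powi (2 * int (k - l) - int k))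
          *s B (-1 + int k - 2 * int (k - l)))"
    unfolding binomial_qsum_def atLeast0AtMost[symmetric]
    by (subst sum.atLeastAtMost_rev) (simp only: add_0_right)
  also have "\<dots> = (\<Sum>l\<le>k. (of_nat (k choose l) * q powi (int k - 2 * int l))
      *s B1i emb q Wm Wp (int k - 2 * int l))"
  proof (rule sum.cong)
    fix l assume "l \<in> {..k}"
    then have "l \<le> k" by simp
    then show "(of_nat (k choose (k - l)) * q powi (2 * int (k - l) - int k))
          *s B (-1 + int k - 2 * int (k - l))
        = (of_nat (k choose l) * q powi (int k - 2 * int l)) *s B1i emb q Wm Wp (int k - 2 * int l)"
      by (simp add: binomial_symmetric[symmetric] of_nat_diff B1i_def B0i_def algebra_simps)
  qed simp
  finally show ?thesis by (simp add: Bmean1_def)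
qed

lemma Gtilde0_coeff_nonzero: "Gtilde0_coeff \<noteq> 0"
  using q_minus_inverse_nonzero q_plus_inverse_nonzero by (simp add: Gtilde0_coeff_def)

lemma expansion_coeff:
  "- inverse (q - inverse q) * x * y * qint q 2 powi (- int k - 2)
    = inverse Gtilde0_coeff * (inverse (q + inverse q) ^ k * (x * y))"
proof -
  have "qint q 2 powi (- int k - 2) = inverse ((q + inverse q) ^ k * (q + inverse q)\<^sup>2)"
    by (simp add: qint_2 power_int_diff power_int_minus power_add divide_inverse)
  then show ?thesis
    by (simp add: Gtilde0_coeff_def power_inverse mult_ac flip: inverse_minus_eq)
qed

lemma Wm_eq_sum:
  "Wm n = (\<Sum>k\<le>n. \<Sum>l\<le>k.
      emb (- inverse (q - inverse q) * of_nat (k choose l) * q powi (2 * int l - int k)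
           * qint q 2 powi (- int k - 2))
      * Gtilde emb q Gt (n - k) * B0i emb q Wm Wp (int k - 2 * int l))"
proof -
  have "Wm n = inverse Gtilde0_coeff *s Wm_expansion n"
    using expansions_eq Gtilde0_coeff_nonzero by simp
  also have "\<dots> = (\<Sum>k\<le>n. \<Sum>l\<le>k.
      (inverse Gtilde0_coeff
        * (inverse (q + inverse q) ^ k * (of_nat (k choose l) * q powi (2 * int l - int k))))
      *s (Gtilde emb q Gt (n - k) * B0i emb q Wm Wp (int k - 2 * int l)))"
    by (simp add: Wm_expansion_def Bmean0_def binomial_qsum_def scale_sum_right sum_distrib_left)
  finally show ?thesis
    by (simp only: expansion_coeff[symmetric]) (simp add: scale_def mult.assoc)
qed

lemma Wp_eq_sum:
  "Wp n = (\<Sum>k\<le>n. \<Sum>l\<le>k.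
      emb (- inverse (q - inverse q) * of_nat (k choose l) * q powi (int k - 2 * int l)
           * qint q 2 powi (- int k - 2))
      * Gtilde emb q Gt (n - k) * B1i emb q Wm Wp (int k - 2 * int l))"
proof -
  have "Wp n = inverse Gtilde0_coeff *s Wp_expansion n"
    using expansions_eq Gtilde0_coeff_nonzero by simp
  also have "\<dots> = (\<Sum>k\<le>n. \<Sum>l\<le>k.
      (inverse Gtilde0_coeff
        * (inverse (q + inverse q) ^ k * (of_nat (k choose l) * q powi (int k - 2 * int l))))
      *s (Gtilde emb q Gt (n - k) * B1i emb q Wm Wp (int k - 2 * int l)))"
    by (simp add: Wp_expansion_def Bmean1_eq scale_sum_right sum_distrib_left)
  finally show ?thesis
    by (simp only: expansion_coeff[symmetric]) (simp add: scale_def mult.assoc)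
qed

end

theorem proposition11p8:
  fixes q :: "'f::field" and emb :: "'f \<Rightarrow> 'a::ring_1"
    and Wm Wp G Gt :: "nat \<Rightarrow> 'a"
  assumes "q \<noteq> 0" and "\<forall>m::nat. m > 0 \<longrightarrow> q ^ m \<noteq> 1"
    and "central_emb emb"
    and "Oq_rels emb q Wm Wp G Gt"
  shows "Wm n = (\<Sum>k\<le>n. \<Sum>l\<le>k.
            emb (- inverse (q - inverse q) * of_nat (k choose l) * q powi (2 * int l - int k)
                 * qint q 2 powi (- int k - 2))
            * Gtilde emb q Gt (n - k) * B0i emb q Wm Wp (int k - 2 * int l))
    \<and> Wp n = (\<Sum>k\<le>n. \<Sum>l\<le>k.
            emb (- inverse (q - inverse q) * of_nat (k choose l) * q powi (int k - 2 * int l)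
                 * qint q 2 powi (- int k - 2))
            * Gtilde emb q Gt (n - k) * B1i emb q Wm Wp (int k - 2 * int l))"
proof -
  interpret Oq_algebra emb q Wm Wp G Gt
    using assms by unfold_locales
  show ?thesis
    using Wm_eq_sum Wp_eq_sum by blast
qed

end
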